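(* Let $G$ be a reaction network with one-dimensional stoichiometric subspace, $c^*\in\mathbb R^{s-1}$ a total-constant vector, $g(\kappa;c;x_1)$ and $q(\kappa;x_1)$ as below. If for a rate-constant vector $\kappa^*\in\mathbb R^m_{>0}$, $G$ has a positive steady state $x^*$ in $\mathcal P_{c^*}$, then $\frac{\partial g}{\partial x_1}(\kappa^*;c^*;x_1^* )$ has the same sign as $\frac{\partial q}{\partial x_1}(\kappa^*;x_1^* )$, and $x^*$ is stable if and only if $\frac{\partial q}{\partial x_1}(\kappa^*;x_1^* )<0$.
   Context: A reaction network $G$ has species $X_1,\dots,X_s$ and $m$ reactions $\sum_{i}\alpha_{ij}X_i\to\sum_i\beta_{ij}X_i$, $\alpha_{ij},\beta_{ij}\in\mathbb Z_{\ge0}$, $(\alpha_{1j},\dots,\alpha_{sj})\neq(\beta_{1j},\dots,\beta_{sj})$. $\mathcal N$ has entries $\beta_{ij}-\alpha_{ij}$, $S=\mathrm{im}\,\mathcal N$. For $\kappa\in\mathbb R^m_{>0}$, $f(\kappa;x)=\mathcal N(\kappa_1\prod_i x_i^{\alpha_{i1}},\dots,\kappa_m\prod_i x_i^{\alpha_{im}})^\top$. Since $S$ is one-dimensional, species are labelled so that $\beta_{11}-\alpha_{11}\ne0$, and there are $\lambda_j\ne0$ ($\lambda_1=1$) with $\beta_{ij}-\alpha_{ij}=\lambda_j(\beta_{i1}-\alpha_{i1})$. For $c\in\mathbb R^{s-1}$, $\mathcal P_c=\{x\in\mathbb R^s_{\ge0}:(\beta_{i1}-\alpha_{i1})x_1-(\beta_{11}-\alpha_{11})x_i=c_{i-1},\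 i=2,\dots,s\}$. A steady state is $x\ge0$ with $f(\kappa;x)=0$; positive if $x>0$; nondegenerate if $\mathrm{Jac}_f(x)(S)=S$; stable if nondegenerate and all nonzero eigenvalues of $\mathrm{Jac}_f(x)$ have negative real parts. $g(\kappa;c;x_1)=(\beta_{11}-\alpha_{11})\sum_{j=1}^m\lambda_j\kappa_jx_1^{\alpha_{1j}}\prod_{k=2}^s\big(\frac{\beta_{k1}-\alpha_{k1}}{\beta_{11}-\alpha_{11}}x_1-\frac{c_{k-1}}{\beta_{11}-\alpha_{11}}\big)^{\alpha_{kj}}$. Notation for $c^*$: $A_1=1,B_1=0$, $A_i=\frac{\beta_{i1}-\alpha_{i1}}{\beta_{11}-\alpha_{11}}$, $B_i=-\frac{c^*_{i-1}}{\beta_{11}-\alpha_{11}}$ ($i\ge2$). $[i]=\{k:A_k\ne0,B_k/A_k=B_i/A_i\}$ if $A_i\ne0$, $[i]=\{k:A_k=0\}$ otherwise; species labelled so that $1,\dots,r$ represent the $r$ distinct classes. $\varphi_k=\min_j\sum_{i\in[k]}\alpha_{ij}$, $\gamma_{kj}=\sum_{i\in[k]}\alpha_{ij}-\varphi_k$. $\mathcal J=\{i:A_i\neq0\}$, $\mathcal H=\{k\in\{1,\dots,r\}\cap\mathcal J:\gamma_{k1},\dots,\gamma_{km}\text{ not all equal}\}$. $Y_i(x_1)=(A_ix_1+B_i)/|A_i|$ if $i\in\mathcal J$, $Y_i=1$ otherwise; $\mathcal C_j=\prod_{i\in\mathcal J}|A_i|^{\alpha_{ij}}\prod_{i\notin\mathcal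 J}B_i^{\alpha_{ij}}$; $q(\kappa;x_1)=(\beta_{11}-\alpha_{11})\sum_{j=1}^m\lambda_j\kappa_j\mathcal C_j\prod_{k\in\mathcal H}Y_k(x_1)^{\gamma_{kj}}$. *)

theory Defs
  imports "HOL-Analysis.Analysis" "Jordan_Normal_Form.Char_Poly"
begin

(* Conventions: species indexed 1..s, reactions 1..m (as in the paper).
   alpha i j, beta i j :: nat  are the stoichiometric coefficients of species i in reaction j.
   Concentration vectors and rate-constant vectors are functions nat => real, only their
   values on {1..s} resp. {1..m} matter. c is indexed 1..s-1. *)

definition stoich :: "(nat \<Rightarrow> nat \<Rightarrow> nat) \<Rightarrow> (nat \<Rightarrow> nat \<Rightarrow> nat) \<Rightarrow> nat \<Rightarrow> nat \<Rightarrow> real" where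
  "stoich \<alpha> \<beta> i j = real (\<beta> i j) - real (\<alpha> i j)"

definition rfun :: "(nat \<Rightarrow> nat \<Rightarrow> nat) \<Rightarrow> (nat \<Rightarrow> nat \<Rightarrow> nat) \<Rightarrow> nat \<Rightarrow> nat
    \<Rightarrow> (nat \<Rightarrow> real) \<Rightarrow> (nat \<Rightarrow> real) \<Rightarrow> nat \<Rightarrow> real" where
  "rfun \<alpha> \<beta> s m \<kappa> x i = (\<Sum>j=1..m. stoich \<alpha> \<beta> i j * (\<kappa> j * (\<Prod>l=1..s. x l ^ \<alpha> l j)))"

definition steady_state where
  "steady_state \<alpha> \<beta> s m \<kappa> x \<longleftrightarrow> (\<forall>i\<in>{1..s}. x i \<ge> 0) \<and> (\<forall>i\<in>{1..s}. rfun \<alpha> \<beta> s m \<kappa> x i = 0)"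

definition positive_vec :: "nat \<Rightarrow> (nat \<Rightarrow> real) \<Rightarrow> bool" where
  "positive_vec s x \<longleftrightarrow> (\<forall>i\<in>{1..s}. x i > 0)"

definition jac_entry where
  "jac_entry \<alpha> \<beta> s m \<kappa> x i k = deriv (\<lambda>t. rfun \<alpha> \<beta> s m \<kappa> (x(k := t)) i) (x k)"

(* matrices (0-based in Jordan_Normal_Form, shifted by one) *)
definition stoich_mat :: "(nat \<Rightarrow> nat \<Rightarrow> nat) \<Rightarrow> (nat \<Rightarrow> nat \<Rightarrow> nat) \<Rightarrow> nat \<Rightarrow> nat \<Rightarrow> real mat" where
  "stoich_mat \<alpha> \<beta> s m = mat s m (\<lambda>(i, j). stoich \<alpha> \<beta> (Suc i) (Suc j))"

definition jac_mat :: "(nat \<Rightarrow> nat \<Rightarrow> nat) \<Rightarrow> (nat \<Rightarrow> nat \<Rightarrow> nat) \<Rightarrow> nat \<Rightarrow> nat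
    \<Rightarrow> (nat \<Rightarrow> real) \<Rightarrow> (nat \<Rightarrow> real) \<Rightarrow> real mat" where
  "jac_mat \<alpha> \<beta> s m \<kappa> x = mat s s (\<lambda>(i, k). jac_entry \<alpha> \<beta> s m \<kappa> x (Suc i) (Suc k))"

definition stoich_space :: "(nat \<Rightarrow> nat \<Rightarrow> nat) \<Rightarrow> (nat \<Rightarrow> nat \<Rightarrow> nat) \<Rightarrow> nat \<Rightarrow> nat \<Rightarrow> real vec set" where
  "stoich_space \<alpha> \<beta> s m = {stoich_mat \<alpha> \<beta> s m *\<^sub>v y | y. y \<in> carrier_vec m}"

definition nondegenerate where
  "nondegenerate \<alpha> \<beta> s m \<kappa> x \<longleftrightarrow>
     steady_state \<alpha> \<beta> s m \<kappa> x \<and>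
     (\<lambda>u. jac_mat \<alpha> \<beta> s m \<kappa> x *\<^sub>v u) ` stoich_space \<alpha> \<beta> s m = stoich_space \<alpha> \<beta> s m"

definition stable where
  "stable \<alpha> \<beta> s m \<kappa> x \<longleftrightarrow> nondegenerate \<alpha> \<beta> s m \<kappa> x \<and>
     (\<forall>ev. eigenvalue (map_mat complex_of_real (jac_mat \<alpha> \<beta> s m \<kappa> x)) ev \<and> ev \<noteq> 0 \<longrightarrow> Re ev < 0)"

definition compat_class where
  "compat_class \<alpha> \<beta> s c = {x. (\<forall>i\<in>{1..s}. x i \<ge> 0) \<and>
     (\<forall>i\<in>{2..s}. stoich \<alpha> \<beta> i 1 * x 1 - stoich \<alpha> \<beta> 1 1 * x i = c (i - 1))}"

definition gfun where
  "gfun \<alpha> \<beta> s m lam \<kappa> c x1 = stoich \<alpha> \<beta> 1 1 *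
     (\<Sum>j=1..m. lam j * \<kappa> j * x1 ^ \<alpha> 1 j *
        (\<Prod>k=2..s. (stoich \<alpha> \<beta> k 1 / stoich \<alpha> \<beta> 1 1 * x1 - c (k - 1) / stoich \<alpha> \<beta> 1 1) ^ \<alpha> k j))"

definition Acoef where
  "Acoef \<alpha> \<beta> i = (if i = 1 then 1 else stoich \<alpha> \<beta> i 1 / stoich \<alpha> \<beta> 1 1)"

definition Bcoef where
  "Bcoef \<alpha> \<beta> c i = (if i = 1 then 0 else - c (i - 1) / stoich \<alpha> \<beta> 1 1)"

definition cls where
  "cls \<alpha> \<beta> s c i = (if Acoef \<alpha> \<beta> i \<noteq> 0
     then {k\<in>{1..s}. Acoef \<alpha> \<beta> k \<noteq> 0 \<and> Bcoef \<alpha> \<beta> c k / Acoef \<alpha> \<beta> k = Bcoef \<alpha> \<beta> c i / Acoef \<alpha> \<beta> i}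
     else {k\<in>{1..s}. Acoef \<alpha> \<beta> k = 0})"

definition phi where
  "phi \<alpha> \<beta> s m c k = Min ((\<lambda>j. \<Sum>i\<in>cls \<alpha> \<beta> s c k. \<alpha> i j) ` {1..m})"

definition gam where
  "gam \<alpha> \<beta> s m c k j = (\<Sum>i\<in>cls \<alpha> \<beta> s c k. \<alpha> i j) - phi \<alpha> \<beta> s m c k"

definition Jset where
  "Jset \<alpha> \<beta> s = {i\<in>{1..s}. Acoef \<alpha> \<beta> i \<noteq> 0}"

definition Hset where
  "Hset \<alpha> \<beta> s m r c = {k\<in>{1..r} \<inter> Jset \<alpha> \<beta> s.
      \<not> (\<forall>j\<in>{1..m}. \<forall>j'\<in>{1..m}. gam \<alpha> \<beta> s m c k j = gam \<alpha> \<beta> s m c k j')}"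

definition Yfun where
  "Yfun \<alpha> \<beta> s c i x1 = (if i \<in> Jset \<alpha> \<beta> s
     then (Acoef \<alpha> \<beta> i * x1 + Bcoef \<alpha> \<beta> c i) / \<bar>Acoef \<alpha> \<beta> i\<bar> else 1)"

definition Ccoef where
  "Ccoef \<alpha> \<beta> s c j = (\<Prod>i\<in>Jset \<alpha> \<beta> s. \<bar>Acoef \<alpha> \<beta> i\<bar> ^ \<alpha> i j) *
     (\<Prod>i\<in>{1..s} - Jset \<alpha> \<beta> s. Bcoef \<alpha> \<beta> c i ^ \<alpha> i j)"

definition qfun where
  "qfun \<alpha> \<beta> s m r lam c \<kappa> x1 = stoich \<alpha> \<beta> 1 1 *
     (\<Sum>j=1..m. lam j * \<kappa> j * Ccoef \<alpha> \<beta> s c j *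
        (\<Prod>k\<in>Hset \<alpha> \<beta> s m r c. Yfun \<alpha> \<beta> s c k x1 ^ gam \<alpha> \<beta> s m c k j))"

end

theory Submission
  imports Defs
begin

(* Under lam_rel every rate function factors as f_i(x) = (beta_i1 - alpha_i1) * rho(x) with the
   single polynomial rho(x) = sum_j lam_j kappa_j x^alpha_j (net_rate below), so the Jacobian is the rank-one
   matrix v (grad rho)^T with v the first column of N.  Such a matrix maps the line S = span v
   onto itself iff grad rho . v <> 0, and grad rho . v is its only possible nonzero eigenvalue;
   hence x is stable iff grad rho . v < 0.  On P_c every coordinate is affine in x_1, so
   g(x_1) = v_1 rho(A x_1 + B) and the chain rule gives g'(x_1) = grad rho . v.
   Finally, at a positive point the affine factors of one class [k] coincide, and pulling the
   common powers out of g gives g = P q with P(x_1) > 0; since g(x_1) = 0, g' = P q' there. *)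

section \<open>Rank-one matrices\<close>

definition outer_prod_mat :: "'a::comm_ring_1 vec \<Rightarrow> 'a vec \<Rightarrow> 'a mat" where
  "outer_prod_mat v w = mat (dim_vec v) (dim_vec w) (\<lambda>(i, k). vec_index v i * vec_index w k)"

lemma dim_outer_prod_mat [simp]:
  "dim_row (outer_prod_mat v w) = dim_vec v"
  "dim_col (outer_prod_mat v w) = dim_vec w"
  by (simp_all add: outer_prod_mat_def)

lemma outer_prod_mat_mult_vec:
  assumes "u \<in> carrier_vec (dim_vec w)"
  shows "outer_prod_mat v w *\<^sub>v u = scalar_prod w u \<cdot>\<^sub>v v"
  using assms
  by (intro eq_vecI)
    (auto simp: outer_prod_mat_def mult_mat_vec_def scalar_prod_def sum_distrib_left mult_ac)

lemma smult_vec_eq_zero_iff: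
  fixes u :: "'a::field vec"
  assumes "u \<in> carrier_vec n"
  shows "a \<cdot>\<^sub>v u = 0\<^sub>v n \<longleftrightarrow> a = 0 \<or> u = 0\<^sub>v n"
proof
  assume au: "a \<cdot>\<^sub>v u = 0\<^sub>v n"
  show "a = 0 \<or> u = 0\<^sub>v n"
  proof (cases "a = 0")
    case False
    then have "u = (1 / a) \<cdot>\<^sub>v (a \<cdot>\<^sub>v u)" by (simp add: smult_smult_assoc)
    also have "\<dots> = 0\<^sub>v n" unfolding au by (intro eq_vecI) auto
    finally show ?thesis by simp
  qed simp
qed (use assms in auto)

lemma eigenvalue_outer_prod_mat_iff:
  fixes v w :: "'a::field vec"
  assumes v: "v \<in> carrier_vec n" and w: "w \<in> carrier_vec n" and v0: "v \<noteq> 0\<^sub>v n"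
    and ev0: "ev \<noteq> 0"
  shows "eigenvalue (outer_prod_mat v w) ev \<longleftrightarrow> ev = scalar_prod w v"
proof
  assume "eigenvalue (outer_prod_mat v w) ev"
  then obtain u where u: "u \<in> carrier_vec n" "u \<noteq> 0\<^sub>v n"
    and eig: "scalar_prod w u \<cdot>\<^sub>v v = ev \<cdot>\<^sub>v u"
    using v w by (auto simp: eigenvalue_def eigenvector_def outer_prod_mat_mult_vec)
  have "scalar_prod w u \<noteq> 0"
  proof
    assume "scalar_prod w u = 0"
    then have "ev \<cdot>\<^sub>v u = 0 \<cdot>\<^sub>v v" using eig by simp
    also have "\<dots> = 0\<^sub>v n" using v by (simp add: smult_vec_eq_zero_iff)
    finally have "ev \<cdot>\<^sub>v u = 0\<^sub>v n" .
    then show False using u ev0 by (simp add: smult_vec_eq_zero_iff)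
  qed
  moreover have "scalar_prod w u * scalar_prod w v = ev * scalar_prod w u"
    using arg_cong[OF eig, of "scalar_prod w"] u v w by simp
  ultimately show "ev = scalar_prod w v" by simp
next
  assume "ev = scalar_prod w v"
  then have "eigenvector (outer_prod_mat v w) v ev"
    using v w v0 by (auto simp: eigenvector_def outer_prod_mat_mult_vec)
  then show "eigenvalue (outer_prod_mat v w) ev" by (auto simp: eigenvalue_def)
qed

lemma outer_prod_mat_image_line_iff:
  fixes v w :: "'a::field vec"
  assumes v: "v \<in> carrier_vec n" and w: "w \<in> carrier_vec n" and v0: "v \<noteq> 0\<^sub>v n"
  shows "(\<lambda>u. outer_prod_mat v w *\<^sub>v u) ` range (\<lambda>t. t \<cdot>\<^sub>v v) = range (\<lambda>t. t \<cdot>\<^sub>v v)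
    \<longleftrightarrow> scalar_prod w v \<noteq> 0"
proof -
  define T where "T = scalar_prod w v"
  have image: "(\<lambda>u. outer_prod_mat v w *\<^sub>v u) ` range (\<lambda>t. t \<cdot>\<^sub>v v) = range (\<lambda>t. (t * T) \<cdot>\<^sub>v v)"
    using v w by (auto simp: image_image outer_prod_mat_mult_vec smult_smult_assoc T_def mult.commute)
  show ?thesis
    unfolding image T_def[symmetric]
  proof
    assume line: "range (\<lambda>t. (t * T) \<cdot>\<^sub>v v) = range (\<lambda>t. t \<cdot>\<^sub>v v)"
    show "T \<noteq> 0"
    proof
      assume "T = 0"
      have "v \<in> range (\<lambda>t. t \<cdot>\<^sub>v v)" using rangeI[of "\<lambda>t. t \<cdot>\<^sub>v v" 1] by simp
      then obtain t where "v = (t * T) \<cdot>\<^sub>v v" using line by auto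
      also have "\<dots> = 0\<^sub>v n" using \<open>T = 0\<close> v by (simp add: smult_vec_eq_zero_iff)
      finally show False using v0 by simp
    qed
  next
    assume "T \<noteq> 0"
    then have "range (\<lambda>t. t * T) = UNIV"
      by (intro surjI[of _ "\<lambda>t. t / T"]) simp
    moreover have "range (\<lambda>t. (t * T) \<cdot>\<^sub>v v) = (\<lambda>t. t \<cdot>\<^sub>v v) ` range (\<lambda>t. t * T)"
      by (simp add: image_image)
    ultimately show "range (\<lambda>t. (t * T) \<cdot>\<^sub>v v) = range (\<lambda>t. t \<cdot>\<^sub>v v)"
      by simp
  qed
qed

lemma of_real_outer_prod_mat:
  "map_mat of_real (outer_prod_mat v w) = outer_prod_mat (map_vec of_real v) (map_vec of_real w)"
  by (rule eq_matI) (auto simp: outer_prod_mat_def)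

lemma outer_prod_mat_nonzero_eigenvalues_neg_iff:
  fixes v w :: "real vec"
  assumes v: "v \<in> carrier_vec n" and w: "w \<in> carrier_vec n" and v0: "v \<noteq> 0\<^sub>v n"
  shows "(\<forall>ev. eigenvalue (map_mat complex_of_real (outer_prod_mat v w)) ev \<and> ev \<noteq> 0 \<longrightarrow> Re ev < 0)
    \<longleftrightarrow> (scalar_prod w v \<noteq> 0 \<longrightarrow> scalar_prod w v < 0)"
proof -
  let ?vc = "map_vec complex_of_real v" and ?wc = "map_vec complex_of_real w"
  have vc: "?vc \<in> carrier_vec n" and wc: "?wc \<in> carrier_vec n" using v w by auto
  have vc0: "?vc \<noteq> 0\<^sub>v n"
  proof
    assume "?vc = 0\<^sub>v n"
    then have "vec_index v i = 0" if "i < n" for i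
      using that v by (metis carrier_vecD index_map_vec(1) index_zero_vec(1) of_real_eq_0_iff)
    then show False using v v0 by (metis carrier_vecD eq_vecI index_zero_vec)
  qed
  have "scalar_prod ?wc ?vc = of_real (scalar_prod w v)" using v w by (simp add: scalar_prod_def)
  then show ?thesis
    unfolding of_real_outer_prod_mat using eigenvalue_outer_prod_mat_iff[OF vc wc vc0]
    by (metis Re_complex_of_real of_real_eq_0_iff)
qed

section \<open>Derivatives along affine lines\<close>

(* For e k = 0 the truncated exponent e k - 1 is harmless: the factor real (e k) vanishes. *)
definition monomial_pderiv :: "nat set \<Rightarrow> (nat \<Rightarrow> nat) \<Rightarrow> nat \<Rightarrow> (nat \<Rightarrow> real) \<Rightarrow> real" where
  "monomial_pderiv L e k y = real (e k) * y k ^ (e k - 1) * (\<Prod>l\<in>L - {k}. y l ^ e l)"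

lemma monomial_along_line_has_real_derivative:
  fixes a b :: "nat \<Rightarrow> real"
  shows "((\<lambda>t. \<Prod>l\<in>L. (a l * t + b l) ^ e l) has_real_derivative
    (\<Sum>k\<in>L. a k * monomial_pderiv L e k (\<lambda>l. a l * t0 + b l))) (at t0)"
proof -
  have "((\<lambda>t. \<Prod>l\<in>L. (a l * t + b l) ^ e l) has_real_derivative
      (\<Sum>k\<in>L. (real (e k) * (a k * t0 + b k) ^ (e k - 1) * a k) * (\<Prod>l\<in>L - {k}. (a l * t0 + b l) ^ e l)))
      (at t0)"
    by (rule has_field_derivative_prod) (auto intro!: derivative_eq_intros)
  then show ?thesis by (simp add: monomial_pderiv_def mult_ac)
qed

definition net_rate :: "(nat \<Rightarrow> nat \<Rightarrow> nat) \<Rightarrow> nat \<Rightarrow> nat \<Rightarrow> (nat \<Rightarrow> real) \<Rightarrow> (nat \<Rightarrow> real)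
    \<Rightarrow> (nat \<Rightarrow> real) \<Rightarrow> real" where
  "net_rate \<alpha> s m lam \<kappa> y = (\<Sum>j=1..m. lam j * \<kappa> j * (\<Prod>l=1..s. y l ^ \<alpha> l j))"

definition net_rate_pderiv :: "(nat \<Rightarrow> nat \<Rightarrow> nat) \<Rightarrow> nat \<Rightarrow> nat \<Rightarrow> (nat \<Rightarrow> real) \<Rightarrow> (nat \<Rightarrow> real)
    \<Rightarrow> nat \<Rightarrow> (nat \<Rightarrow> real) \<Rightarrow> real" where
  "net_rate_pderiv \<alpha> s m lam \<kappa> k y = (\<Sum>j=1..m. lam j * \<kappa> j * monomial_pderiv {1..s} (\<lambda>l. \<alpha> l j) k y)"

lemma net_rate_cong:
  "(\<And>l. l \<in> {1..s} \<Longrightarrow> y l = z l) \<Longrightarrow> net_rate \<alpha> s m lam \<kappa> y = net_rate \<alpha> s m lam \<kappa> z"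
  unfolding net_rate_def by (auto intro!: sum.cong prod.cong arg_cong2[where f = times])

lemma net_rate_pderiv_cong:
  "k \<in> {1..s} \<Longrightarrow> (\<And>l. l \<in> {1..s} \<Longrightarrow> y l = z l)
    \<Longrightarrow> net_rate_pderiv \<alpha> s m lam \<kappa> k y = net_rate_pderiv \<alpha> s m lam \<kappa> k z"
  unfolding net_rate_pderiv_def monomial_pderiv_def
  by (auto intro!: sum.cong prod.cong arg_cong2[where f = times])

lemma net_rate_along_line_has_real_derivative:
  "((\<lambda>t. net_rate \<alpha> s m lam \<kappa> (\<lambda>l. a l * t + b l)) has_real_derivative
    (\<Sum>k=1..s. a k * net_rate_pderiv \<alpha> s m lam \<kappa> k (\<lambda>l. a l * t0 + b l))) (at t0)"
proof -
  let ?pd = "\<lambda>j k. monomial_pderiv {1..s} (\<lambda>l. \<alpha> l j) k (\<lambda>l. a l * t0 + b l)"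
  have "((\<lambda>t. net_rate \<alpha> s m lam \<kappa> (\<lambda>l. a l * t + b l)) has_real_derivative
      (\<Sum>j=1..m. lam j * \<kappa> j * (\<Sum>k=1..s. a k * ?pd j k))) (at t0)"
    unfolding net_rate_def by (intro DERIV_sum DERIV_cmult monomial_along_line_has_real_derivative)
  also have "(\<Sum>j=1..m. lam j * \<kappa> j * (\<Sum>k=1..s. a k * ?pd j k))
      = (\<Sum>k=1..s. a k * (\<Sum>j=1..m. lam j * \<kappa> j * ?pd j k))"
    by (simp add: sum_distrib_left mult_ac) (rule sum.swap)
  finally show ?thesis by (simp add: net_rate_pderiv_def)
qed

lemma net_rate_has_partial_derivative:
  assumes "k \<in> {1..s}"
  shows "((\<lambda>t. net_rate \<alpha> s m lam \<kappa> (y(k := t))) has_real_derivative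
    net_rate_pderiv \<alpha> s m lam \<kappa> k y) (at (y k))"
proof -
  define a :: "nat \<Rightarrow> real" where "a l = of_bool (l = k)" for l
  have line: "y(k := t) = (\<lambda>l. a l * t + (y(k := 0)) l)" for t
    by (auto simp: a_def)
  have "(\<Sum>k'=1..s. a k' * net_rate_pderiv \<alpha> s m lam \<kappa> k' y) = net_rate_pderiv \<alpha> s m lam \<kappa> k y"
  proof -
    have "{1..s} \<inter> {l. l = k} = {k}" using assms by auto
    then show ?thesis by (simp add: a_def)
  qed
  then show ?thesis
    using net_rate_along_line_has_real_derivative[of \<alpha> s m lam \<kappa> a "y(k := 0)" "y k"]
    by (simp only: line[symmetric] fun_upd_triv)
qed

lemma compat_class_affine:
  assumes "stoich \<alpha> \<beta> 1 1 \<noteq> 0" and "x \<in> compat_class \<alpha> \<beta> s c" and "l \<in> {1..s}"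
  shows "x l = Acoef \<alpha> \<beta> l * x 1 + Bcoef \<alpha> \<beta> c l"
proof (cases "l = 1")
  case False
  then have "stoich \<alpha> \<beta> l 1 * x 1 - stoich \<alpha> \<beta> 1 1 * x l = c (l - 1)"
    using assms(2,3) by (auto simp: compat_class_def)
  then show ?thesis using False assms(1) by (simp add: Acoef_def Bcoef_def field_simps)
qed (simp add: Acoef_def Bcoef_def)

lemma gfun_eq_net_rate_along_line:
  assumes "1 \<le> s"
  shows "gfun \<alpha> \<beta> s m lam \<kappa> c
    = (\<lambda>t. stoich \<alpha> \<beta> 1 1 * net_rate \<alpha> s m lam \<kappa> (\<lambda>l. Acoef \<alpha> \<beta> l * t + Bcoef \<alpha> \<beta> c l))"
proof
  fix t
  have "(\<Prod>l=1..s. (Acoef \<alpha> \<beta> l * t + Bcoef \<alpha> \<beta> c l) ^ \<alpha> l j) = t ^ \<alpha> 1 j *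
      (\<Prod>k=2..s. (stoich \<alpha> \<beta> k 1 / stoich \<alpha> \<beta> 1 1 * t - c (k - 1) / stoich \<alpha> \<beta> 1 1) ^ \<alpha> k j)"
    for j
  proof -
    have "(\<Prod>l=1..s. (Acoef \<alpha> \<beta> l * t + Bcoef \<alpha> \<beta> c l) ^ \<alpha> l j)
        = (Acoef \<alpha> \<beta> 1 * t + Bcoef \<alpha> \<beta> c 1) ^ \<alpha> 1 j
          * (\<Prod>l=Suc 1..s. (Acoef \<alpha> \<beta> l * t + Bcoef \<alpha> \<beta> c l) ^ \<alpha> l j)"
      using assms by (rule prod.atLeast_Suc_atMost)
    also have "(\<Prod>l=Suc 1..s. (Acoef \<alpha> \<beta> l * t + Bcoef \<alpha> \<beta> c l) ^ \<alpha> l j)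
        = (\<Prod>k=2..s. (stoich \<alpha> \<beta> k 1 / stoich \<alpha> \<beta> 1 1 * t - c (k - 1) / stoich \<alpha> \<beta> 1 1) ^ \<alpha> k j)"
      by (intro prod.cong) (auto simp: Acoef_def Bcoef_def)
    finally show ?thesis by (simp add: Acoef_def Bcoef_def)
  qed
  then show "gfun \<alpha> \<beta> s m lam \<kappa> c t
      = stoich \<alpha> \<beta> 1 1 * net_rate \<alpha> s m lam \<kappa> (\<lambda>l. Acoef \<alpha> \<beta> l * t + Bcoef \<alpha> \<beta> c l)"
    by (simp add: gfun_def net_rate_def mult.assoc)
qed

section \<open>Jacobian and stability of a network with one-dimensional stoichiometric subspace\<close>

locale one_dim_network =
  fixes \<alpha> \<beta> :: "nat \<Rightarrow> nat \<Rightarrow> nat" and s m :: nat and lam :: "nat \<Rightarrow> real"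
  assumes s_pos: "1 \<le> s" and m_pos: "1 \<le> m"
    and one_dim: "stoich \<alpha> \<beta> 1 1 \<noteq> 0" and lam1: "lam 1 = 1"
    and lam_rel: "\<And>i j. i \<in> {1..s} \<Longrightarrow> j \<in> {1..m} \<Longrightarrow> stoich \<alpha> \<beta> i j = lam j * stoich \<alpha> \<beta> i 1"
begin

definition stoich_vec :: "real vec" where
  "stoich_vec = vec s (\<lambda>i. stoich \<alpha> \<beta> (Suc i) 1)"

definition net_rate_grad :: "(nat \<Rightarrow> real) \<Rightarrow> (nat \<Rightarrow> real) \<Rightarrow> real vec" where
  "net_rate_grad \<kappa> x = vec s (\<lambda>k. net_rate_pderiv \<alpha> s m lam \<kappa> (Suc k) x)"

lemma stoich_vec_carrier: "stoich_vec \<in> carrier_vec s"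
  by (simp add: stoich_vec_def)

lemma net_rate_grad_carrier: "net_rate_grad \<kappa> x \<in> carrier_vec s"
  by (simp add: net_rate_grad_def)

lemma stoich_vec_nonzero: "stoich_vec \<noteq> 0\<^sub>v s"
proof
  assume "stoich_vec = 0\<^sub>v s"
  then have "vec_index stoich_vec 0 = 0" using s_pos by simp
  then show False using s_pos one_dim by (simp add: stoich_vec_def)
qed

lemma rfun_eq_net_rate:
  assumes "i \<in> {1..s}"
  shows "rfun \<alpha> \<beta> s m \<kappa> x i = stoich \<alpha> \<beta> i 1 * net_rate \<alpha> s m lam \<kappa> x"
  unfolding rfun_def net_rate_def sum_distrib_left
proof (intro sum.cong refl)
  fix j assume j: "j \<in> {1..m}"
  show "stoich \<alpha> \<beta> i j * (\<kappa> j * (\<Prod>l=1..s. x l ^ \<alpha> l j))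
      = stoich \<alpha> \<beta> i 1 * (lam j * \<kappa> j * (\<Prod>l=1..s. x l ^ \<alpha> l j))"
    using lam_rel[OF assms j] by simp
qed

lemma jac_entry_eq:
  assumes "i \<in> {1..s}" and "k \<in> {1..s}"
  shows "jac_entry \<alpha> \<beta> s m \<kappa> x i k = stoich \<alpha> \<beta> i 1 * net_rate_pderiv \<alpha> s m lam \<kappa> k x"
proof -
  have "((\<lambda>t. rfun \<alpha> \<beta> s m \<kappa> (x(k := t)) i) has_real_derivative
      stoich \<alpha> \<beta> i 1 * net_rate_pderiv \<alpha> s m lam \<kappa> k x) (at (x k))"
    unfolding rfun_eq_net_rate[OF assms(1)]
    by (intro DERIV_cmult net_rate_has_partial_derivative assms(2))
  then show ?thesis unfolding jac_entry_def by (rule DERIV_imp_deriv)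
qed

lemma jac_mat_eq_outer_prod_mat:
  "jac_mat \<alpha> \<beta> s m \<kappa> x = outer_prod_mat stoich_vec (net_rate_grad \<kappa> x)"
  by (rule eq_matI)
    (simp_all add: jac_mat_def outer_prod_mat_def stoich_vec_def net_rate_grad_def jac_entry_eq)

lemma stoich_mat_mult_vec:
  assumes "y \<in> carrier_vec m"
  shows "stoich_mat \<alpha> \<beta> s m *\<^sub>v y = (\<Sum>j<m. lam (Suc j) * vec_index y j) \<cdot>\<^sub>v stoich_vec"
proof (rule eq_vecI)
  fix i assume "i < dim_vec ((\<Sum>j<m. lam (Suc j) * vec_index y j) \<cdot>\<^sub>v stoich_vec)"
  then have i: "i < s" by (simp add: stoich_vec_def)
  then have "vec_index (stoich_mat \<alpha> \<beta> s m *\<^sub>v y) i = (\<Sum>j<m. stoich \<alpha> \<beta> (Suc i) (Suc j) * vec_index y j)"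
    using assms by (simp add: stoich_mat_def scalar_prod_def atLeast0LessThan)
  also have "\<dots> = (\<Sum>j<m. lam (Suc j) * vec_index y j) * stoich \<alpha> \<beta> (Suc i) 1"
    unfolding sum_distrib_right
  proof (intro sum.cong refl)
    fix j assume "j \<in> {..<m}"
    then show "stoich \<alpha> \<beta> (Suc i) (Suc j) * vec_index y j
        = lam (Suc j) * vec_index y j * stoich \<alpha> \<beta> (Suc i) 1"
      using i lam_rel[of "Suc i" "Suc j"] by simp
  qed
  finally show "vec_index (stoich_mat \<alpha> \<beta> s m *\<^sub>v y) i
      = vec_index ((\<Sum>j<m. lam (Suc j) * vec_index y j) \<cdot>\<^sub>v stoich_vec) i"
    using i by (simp add: stoich_vec_def)
qed (simp add: stoich_mat_def stoich_vec_def)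

lemma stoich_space_eq_line: "stoich_space \<alpha> \<beta> s m = range (\<lambda>t. t \<cdot>\<^sub>v stoich_vec)"
proof (intro equalityI subsetI)
  fix z assume "z \<in> stoich_space \<alpha> \<beta> s m"
  then show "z \<in> range (\<lambda>t. t \<cdot>\<^sub>v stoich_vec)"
    by (auto simp: stoich_space_def stoich_mat_mult_vec)
next
  fix z assume "z \<in> range (\<lambda>t. t \<cdot>\<^sub>v stoich_vec)"
  then obtain t where z: "z = t \<cdot>\<^sub>v stoich_vec" by auto
  have "(\<Sum>j<m. lam (Suc j) * vec_index (t \<cdot>\<^sub>v unit_vec m 0) j) = (\<Sum>j<m. if j = 0 then t else 0)"
    by (intro sum.cong) (auto simp: lam1[unfolded One_nat_def])
  also have "\<dots> = t" using m_pos by simp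
  finally have "(\<Sum>j<m. lam (Suc j) * vec_index (t \<cdot>\<^sub>v unit_vec m 0) j) = t" .
  then have "z = stoich_mat \<alpha> \<beta> s m *\<^sub>v (t \<cdot>\<^sub>v unit_vec m 0)"
    by (simp add: stoich_mat_mult_vec z)
  moreover have "t \<cdot>\<^sub>v unit_vec m 0 \<in> carrier_vec m" by simp
  ultimately show "z \<in> stoich_space \<alpha> \<beta> s m"
    unfolding stoich_space_def by blast
qed

lemma stable_iff_grad_neg:
  assumes "steady_state \<alpha> \<beta> s m \<kappa> x"
  shows "stable \<alpha> \<beta> s m \<kappa> x \<longleftrightarrow> scalar_prod (net_rate_grad \<kappa> x) stoich_vec < 0"
proof -
  note rank_one = stoich_vec_carrier net_rate_grad_carrier stoich_vec_nonzero
  show ?thesis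
    unfolding stable_def nondegenerate_def jac_mat_eq_outer_prod_mat stoich_space_eq_line
      outer_prod_mat_image_line_iff[OF rank_one] outer_prod_mat_nonzero_eigenvalues_neg_iff[OF rank_one]
    using assms by auto
qed

lemma scalar_prod_net_rate_grad_stoich_vec:
  "scalar_prod (net_rate_grad \<kappa> x) stoich_vec = (\<Sum>k=1..s. stoich \<alpha> \<beta> k 1 * net_rate_pderiv \<alpha> s m lam \<kappa> k x)"
  by (simp add: scalar_prod_def net_rate_grad_def stoich_vec_def atLeast0LessThan
      sum.atLeast1_atMost_eq mult.commute)

lemma deriv_gfun_eq_grad:
  assumes "x \<in> compat_class \<alpha> \<beta> s c"
  shows "deriv (gfun \<alpha> \<beta> s m lam \<kappa> c) (x 1) = scalar_prod (net_rate_grad \<kappa> x) stoich_vec"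
proof -
  let ?A = "Acoef \<alpha> \<beta>" and ?B = "Bcoef \<alpha> \<beta> c"
  have "(gfun \<alpha> \<beta> s m lam \<kappa> c has_real_derivative
      stoich \<alpha> \<beta> 1 1 * (\<Sum>k=1..s. ?A k * net_rate_pderiv \<alpha> s m lam \<kappa> k (\<lambda>l. ?A l * x 1 + ?B l)))
      (at (x 1))"
    unfolding gfun_eq_net_rate_along_line[OF s_pos]
    by (intro DERIV_cmult net_rate_along_line_has_real_derivative)
  also have "stoich \<alpha> \<beta> 1 1 * (\<Sum>k=1..s. ?A k * net_rate_pderiv \<alpha> s m lam \<kappa> k (\<lambda>l. ?A l * x 1 + ?B l))
      = (\<Sum>k=1..s. stoich \<alpha> \<beta> k 1 * net_rate_pderiv \<alpha> s m lam \<kappa> k x)"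
    unfolding sum_distrib_left
  proof (intro sum.cong refl)
    fix k assume k: "k \<in> {1..s}"
    have "net_rate_pderiv \<alpha> s m lam \<kappa> k (\<lambda>l. ?A l * x 1 + ?B l) = net_rate_pderiv \<alpha> s m lam \<kappa> k x"
      using compat_class_affine[OF one_dim assms, symmetric] by (intro net_rate_pderiv_cong[OF k]) simp
    moreover have "stoich \<alpha> \<beta> 1 1 * ?A k = stoich \<alpha> \<beta> k 1"
      using one_dim by (simp add: Acoef_def)
    ultimately show "stoich \<alpha> \<beta> 1 1 * (?A k * net_rate_pderiv \<alpha> s m lam \<kappa> k (\<lambda>l. ?A l * x 1 + ?B l))
        = stoich \<alpha> \<beta> k 1 * net_rate_pderiv \<alpha> s m lam \<kappa> k x"
      by (simp add: mult.assoc[symmetric])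
  qed
  finally show ?thesis
    unfolding scalar_prod_net_rate_grad_stoich_vec by (rule DERIV_imp_deriv)
qed

lemma gfun_steady_state_root:
  assumes "steady_state \<alpha> \<beta> s m \<kappa> x" and "x \<in> compat_class \<alpha> \<beta> s c"
  shows "gfun \<alpha> \<beta> s m lam \<kappa> c (x 1) = 0"
proof -
  have "gfun \<alpha> \<beta> s m lam \<kappa> c (x 1) = stoich \<alpha> \<beta> 1 1 * net_rate \<alpha> s m lam \<kappa> x"
    unfolding gfun_eq_net_rate_along_line[OF s_pos]
    using compat_class_affine[OF one_dim assms(2), symmetric]
    by (intro arg_cong[of _ _ "(*) _"] net_rate_cong) simp
  also have "\<dots> = rfun \<alpha> \<beta> s m \<kappa> x 1"
    using s_pos by (simp add: rfun_eq_net_rate)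
  also have "\<dots> = 0"
    using assms(1) s_pos by (simp add: steady_state_def)
  finally show ?thesis .
qed

end

section \<open>Factorisation of g through q\<close>

lemma field_differentiable_prod:
  assumes "\<And>i. i \<in> A \<Longrightarrow> f i field_differentiable (at z)"
  shows "(\<lambda>u. \<Prod>i\<in>A. f i u) field_differentiable (at z)"
  using has_field_derivative_prod[of A f "\<lambda>i. deriv (f i) z" z] assms
  by (auto simp: field_differentiable_def DERIV_deriv_iff_field_differentiable)

lemma Yfun_field_differentiable: "Yfun \<alpha> \<beta> s c k field_differentiable (at t)"
proof (cases "k \<in> Jset \<alpha> \<beta> s")
  case True
  have "((\<lambda>t. (Acoef \<alpha> \<beta> k * t + Bcoef \<alpha> \<beta> c k) / \<bar>Acoef \<alpha> \<beta> k\<bar>) has_field_derivative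
      Acoef \<alpha> \<beta> k / \<bar>Acoef \<alpha> \<beta> k\<bar>) (at t)"
    using True by (auto simp: Jset_def intro!: derivative_eq_intros)
  moreover have "Yfun \<alpha> \<beta> s c k = (\<lambda>t. (Acoef \<alpha> \<beta> k * t + Bcoef \<alpha> \<beta> c k) / \<bar>Acoef \<alpha> \<beta> k\<bar>)"
    using True by (simp add: Yfun_def fun_eq_iff)
  ultimately show ?thesis by (auto simp: field_differentiable_def)
next
  case False
  then have "Yfun \<alpha> \<beta> s c k = (\<lambda>t. 1)" by (simp add: Yfun_def fun_eq_iff)
  then show ?thesis by simp
qed

lemma qfun_field_differentiable: "qfun \<alpha> \<beta> s m r lam c \<kappa> field_differentiable (at t)"
  unfolding qfun_def
  by (intro field_differentiable_mult field_differentiable_sum field_differentiable_prod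
      field_differentiable_power field_differentiable_const Yfun_field_differentiable)

(* The positive factor P with g = P * q: the common power phi_k of every class, together with
   the power gamma_k of the classes outside H, where gamma_k does not depend on the reaction. *)
definition gq_cofactor :: "(nat \<Rightarrow> nat \<Rightarrow> nat) \<Rightarrow> (nat \<Rightarrow> nat \<Rightarrow> nat) \<Rightarrow> nat \<Rightarrow> nat \<Rightarrow> nat
    \<Rightarrow> (nat \<Rightarrow> real) \<Rightarrow> real \<Rightarrow> real" where
  "gq_cofactor \<alpha> \<beta> s m r c t =
     (\<Prod>k\<in>{1..r} \<inter> Jset \<alpha> \<beta> s. Yfun \<alpha> \<beta> s c k t ^ phi \<alpha> \<beta> s m c k) *
     (\<Prod>k\<in>{1..r} \<inter> Jset \<alpha> \<beta> s - Hset \<alpha> \<beta> s m r c. Yfun \<alpha> \<beta> s c k t ^ gam \<alpha> \<beta> s m c k 1)"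

lemma gq_cofactor_field_differentiable: "gq_cofactor \<alpha> \<beta> s m r c field_differentiable (at t)"
  unfolding gq_cofactor_def
  by (intro field_differentiable_mult field_differentiable_prod field_differentiable_power
      Yfun_field_differentiable)

lemma prod_line_eq_Ccoef_mult_prod_Jset:
  "(\<Prod>l=1..s. (Acoef \<alpha> \<beta> l * t + Bcoef \<alpha> \<beta> c l) ^ \<alpha> l j)
    = Ccoef \<alpha> \<beta> s c j * (\<Prod>l\<in>Jset \<alpha> \<beta> s. Yfun \<alpha> \<beta> s c l t ^ \<alpha> l j)"
proof -
  let ?J = "Jset \<alpha> \<beta> s" and ?A = "Acoef \<alpha> \<beta>" and ?B = "Bcoef \<alpha> \<beta> c"
  have "(\<Prod>l=1..s. (?A l * t + ?B l) ^ \<alpha> l j)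
      = (\<Prod>l\<in>{1..s} - ?J. (?A l * t + ?B l) ^ \<alpha> l j) * (\<Prod>l\<in>?J. (?A l * t + ?B l) ^ \<alpha> l j)"
    by (rule prod.subset_diff) (auto simp: Jset_def)
  also have "(\<Prod>l\<in>{1..s} - ?J. (?A l * t + ?B l) ^ \<alpha> l j) = (\<Prod>l\<in>{1..s} - ?J. ?B l ^ \<alpha> l j)"
    by (rule prod.cong) (auto simp: Jset_def)
  also have "(\<Prod>l\<in>?J. (?A l * t + ?B l) ^ \<alpha> l j)
      = (\<Prod>l\<in>?J. \<bar>?A l\<bar> ^ \<alpha> l j) * (\<Prod>l\<in>?J. Yfun \<alpha> \<beta> s c l t ^ \<alpha> l j)"
    unfolding prod.distrib[symmetric] power_mult_distrib[symmetric]
    by (rule prod.cong) (auto simp: Yfun_def Jset_def)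
  finally show ?thesis by (simp add: Ccoef_def)
qed

lemma cls_Jset_eq:
  assumes "k \<in> Jset \<alpha> \<beta> s"
  shows "cls \<alpha> \<beta> s c k
    = {l \<in> Jset \<alpha> \<beta> s. Bcoef \<alpha> \<beta> c l / Acoef \<alpha> \<beta> l = Bcoef \<alpha> \<beta> c k / Acoef \<alpha> \<beta> k}"
  using assms by (auto simp: cls_def Jset_def)

lemma cls_disjoint:
  assumes "k \<in> Jset \<alpha> \<beta> s" and "k' \<in> Jset \<alpha> \<beta> s" and "cls \<alpha> \<beta> s c k \<noteq> cls \<alpha> \<beta> s c k'"
  shows "cls \<alpha> \<beta> s c k \<inter> cls \<alpha> \<beta> s c k' = {}"
  using assms by (auto simp: cls_Jset_eq)

lemma Jset_eq_Union_cls: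
  assumes "r \<le> s" and "cls \<alpha> \<beta> s c ` {1..s} = cls \<alpha> \<beta> s c ` {1..r}"
  shows "Jset \<alpha> \<beta> s = (\<Union>k\<in>{1..r} \<inter> Jset \<alpha> \<beta> s. cls \<alpha> \<beta> s c k)"
proof (intro equalityI subsetI)
  fix l assume l: "l \<in> Jset \<alpha> \<beta> s"
  then have "l \<in> {1..s}" by (simp add: Jset_def)
  then obtain k where k: "k \<in> {1..r}" "cls \<alpha> \<beta> s c l = cls \<alpha> \<beta> s c k"
    using assms(2) by (metis imageE imageI)
  have "l \<in> cls \<alpha> \<beta> s c k"
    using \<open>l \<in> {1..s}\<close> unfolding k(2)[symmetric] by (simp add: cls_def)
  moreover have "k \<in> Jset \<alpha> \<beta> s"
    using calculation k(1) l assms(1) by (auto simp: cls_def Jset_def split: if_splits)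
  ultimately show "l \<in> (\<Union>k\<in>{1..r} \<inter> Jset \<alpha> \<beta> s. cls \<alpha> \<beta> s c k)" using k(1) by auto
qed (auto simp: cls_Jset_eq)

lemma cls_exponent_eq_phi_add_gam:
  assumes "j \<in> {1..m}"
  shows "(\<Sum>l\<in>cls \<alpha> \<beta> s c k. \<alpha> l j) = phi \<alpha> \<beta> s m c k + gam \<alpha> \<beta> s m c k j"
proof -
  have "phi \<alpha> \<beta> s m c k \<le> (\<Sum>l\<in>cls \<alpha> \<beta> s c k. \<alpha> l j)"
    unfolding phi_def using assms by (intro Min_le) auto
  then show ?thesis by (simp add: gam_def)
qed

locale positive_compat_point =
  fixes \<alpha> \<beta> :: "nat \<Rightarrow> nat \<Rightarrow> nat" and s :: nat and c x :: "nat \<Rightarrow> real"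
  assumes one_dim: "stoich \<alpha> \<beta> 1 1 \<noteq> 0"
    and positive: "positive_vec s x" and in_class: "x \<in> compat_class \<alpha> \<beta> s c"
begin

lemma Yfun_pos:
  assumes "k \<in> Jset \<alpha> \<beta> s"
  shows "Yfun \<alpha> \<beta> s c k (x 1) > 0"
proof -
  have "k \<in> {1..s}" using assms by (simp add: Jset_def)
  then have "Yfun \<alpha> \<beta> s c k (x 1) = x k / \<bar>Acoef \<alpha> \<beta> k\<bar>"
    using assms compat_class_affine[OF one_dim in_class \<open>k \<in> {1..s}\<close>] by (simp add: Yfun_def)
  then show ?thesis
    using positive \<open>k \<in> {1..s}\<close> assms by (simp add: positive_vec_def Jset_def)
qed

lemma Yfun_eq_on_cls:
  assumes k: "k \<in> Jset \<alpha> \<beta> s" and l: "l \<in> cls \<alpha> \<beta> s c k"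
  shows "Yfun \<alpha> \<beta> s c l = Yfun \<alpha> \<beta> s c k"
proof -
  let ?A = "Acoef \<alpha> \<beta>" and ?B = "Bcoef \<alpha> \<beta> c"
  define \<rho> where "\<rho> = ?B k / ?A k"
  have affine: "?B i = ?A i * \<rho>" "x i = ?A i * (x 1 + \<rho>)" "x i > 0"
    "Yfun \<alpha> \<beta> s c i = (\<lambda>t. sgn (?A i) * (t + \<rho>))"
    if "i \<in> Jset \<alpha> \<beta> s" "?B i / ?A i = \<rho>" for i
  proof -
    have i: "i \<in> {1..s}" "?A i \<noteq> 0" using that(1) by (auto simp: Jset_def)
    then show B: "?B i = ?A i * \<rho>" using that(2) by (simp add: field_simps)
    show "x i = ?A i * (x 1 + \<rho>)"
      using compat_class_affine[OF one_dim in_class i(1)] B by (simp add: algebra_simps)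
    show "x i > 0" using positive i(1) by (simp add: positive_vec_def)
    show "Yfun \<alpha> \<beta> s c i = (\<lambda>t. sgn (?A i) * (t + \<rho>))"
      using that(1) B by (simp add: Yfun_def fun_eq_iff real_sgn_eq field_simps)
  qed
  have "l \<in> Jset \<alpha> \<beta> s" and "?B l / ?A l = \<rho>" using l cls_Jset_eq[OF k] by (auto simp: \<rho>_def)
  note Yl = affine[OF this] and Yk = affine[OF k \<rho>_def[symmetric]]
  have "sgn (?A l) = sgn (?A k)" \<comment> \<open>both multiply x_1 + \<rho> to a positive concentration\<close>
    using Yl(2,3) Yk(2,3) by (auto simp: sgn_if zero_less_mult_iff)
  then show ?thesis using Yl(4) Yk(4) by simp
qed

lemma prod_Jset_eq_prod_classes:
  assumes "r \<le> s" and "inj_on (cls \<alpha> \<beta> s c) {1..r}"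
    and "cls \<alpha> \<beta> s c ` {1..s} = cls \<alpha> \<beta> s c ` {1..r}"
  shows "(\<Prod>l\<in>Jset \<alpha> \<beta> s. Yfun \<alpha> \<beta> s c l t ^ e l)
    = (\<Prod>k\<in>{1..r} \<inter> Jset \<alpha> \<beta> s. Yfun \<alpha> \<beta> s c k t ^ (\<Sum>l\<in>cls \<alpha> \<beta> s c k. e l))"
proof -
  let ?R = "{1..r} \<inter> Jset \<alpha> \<beta> s" and ?cl = "cls \<alpha> \<beta> s c"
  have "(\<Prod>l\<in>Jset \<alpha> \<beta> s. Yfun \<alpha> \<beta> s c l t ^ e l) = (\<Prod>l\<in>(\<Union>k\<in>?R. ?cl k). Yfun \<alpha> \<beta> s c l t ^ e l)"
    using Jset_eq_Union_cls[OF assms(1,3)] by (rule arg_cong)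
  also have "\<dots> = (\<Prod>k\<in>?R. \<Prod>l\<in>?cl k. Yfun \<alpha> \<beta> s c l t ^ e l)"
  proof (rule prod.UNION_disjoint)
    show "\<forall>k\<in>?R. \<forall>k'\<in>?R. k \<noteq> k' \<longrightarrow> ?cl k \<inter> ?cl k' = {}"
    proof (intro ballI impI)
      fix k k' assume "k \<in> ?R" "k' \<in> ?R" "k \<noteq> k'"
      moreover from this have "?cl k \<noteq> ?cl k'" using assms(2) by (meson IntD1 inj_onD)
      ultimately show "?cl k \<inter> ?cl k' = {}" by (simp add: cls_disjoint)
    qed
  qed (simp_all add: cls_def)
  also have "\<dots> = (\<Prod>k\<in>?R. \<Prod>l\<in>?cl k. Yfun \<alpha> \<beta> s c k t ^ e l)"
  proof (intro prod.cong refl)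
    fix k l assume "k \<in> ?R" "l \<in> ?cl k"
    then show "Yfun \<alpha> \<beta> s c l t ^ e l = Yfun \<alpha> \<beta> s c k t ^ e l"
      using Yfun_eq_on_cls[of k l] by simp
  qed
  finally show ?thesis by (simp add: power_sum)
qed

lemma gq_cofactor_pos: "gq_cofactor \<alpha> \<beta> s m r c (x 1) > 0"
  unfolding gq_cofactor_def by (intro mult_pos_pos prod_pos zero_less_power Yfun_pos) auto

lemma prod_line_eq_gq_cofactor_mult:
  assumes "r \<le> s" and "inj_on (cls \<alpha> \<beta> s c) {1..r}"
    and "cls \<alpha> \<beta> s c ` {1..s} = cls \<alpha> \<beta> s c ` {1..r}"
    and "1 \<le> m" and j: "j \<in> {1..m}"
  shows "(\<Prod>l=1..s. (Acoef \<alpha> \<beta> l * t + Bcoef \<alpha> \<beta> c l) ^ \<alpha> l j)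
    = Ccoef \<alpha> \<beta> s c j * gq_cofactor \<alpha> \<beta> s m r c t
      * (\<Prod>k\<in>Hset \<alpha> \<beta> s m r c. Yfun \<alpha> \<beta> s c k t ^ gam \<alpha> \<beta> s m c k j)"
proof -
  let ?R = "{1..r} \<inter> Jset \<alpha> \<beta> s" and ?H = "Hset \<alpha> \<beta> s m r c" and ?Y = "\<lambda>k. Yfun \<alpha> \<beta> s c k t"
    and ?\<phi> = "phi \<alpha> \<beta> s m c" and ?\<gamma> = "gam \<alpha> \<beta> s m c"
  have "?H \<subseteq> ?R" by (auto simp: Hset_def)
  have \<gamma>_const: "?\<gamma> k j = ?\<gamma> k 1" if "k \<in> ?R - ?H" for k
  proof -
    from that have "\<forall>j\<in>{1..m}. \<forall>j'\<in>{1..m}. ?\<gamma> k j = ?\<gamma> k j'" unfolding Hset_def by blast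
    moreover have "1 \<in> {1..m}" using assms(4) by simp
    ultimately show ?thesis using j by blast
  qed
  have "(\<Prod>l=1..s. (Acoef \<alpha> \<beta> l * t + Bcoef \<alpha> \<beta> c l) ^ \<alpha> l j)
      = Ccoef \<alpha> \<beta> s c j * (\<Prod>l\<in>Jset \<alpha> \<beta> s. ?Y l ^ \<alpha> l j)"
    by (rule prod_line_eq_Ccoef_mult_prod_Jset)
  also have "(\<Prod>l\<in>Jset \<alpha> \<beta> s. ?Y l ^ \<alpha> l j) = (\<Prod>k\<in>?R. ?Y k ^ (\<Sum>l\<in>cls \<alpha> \<beta> s c k. \<alpha> l j))"
    by (rule prod_Jset_eq_prod_classes[OF assms(1-3)])
  also have "\<dots> = (\<Prod>k\<in>?R. ?Y k ^ (?\<phi> k + ?\<gamma> k j))"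
    by (simp only: cls_exponent_eq_phi_add_gam[OF j])
  also have "(\<Prod>k\<in>?R. ?Y k ^ (?\<phi> k + ?\<gamma> k j)) = (\<Prod>k\<in>?R. ?Y k ^ ?\<phi> k) * (\<Prod>k\<in>?R. ?Y k ^ ?\<gamma> k j)"
    by (simp add: power_add prod.distrib)
  also have "(\<Prod>k\<in>?R. ?Y k ^ ?\<gamma> k j) = (\<Prod>k\<in>?R - ?H. ?Y k ^ ?\<gamma> k j) * (\<Prod>k\<in>?H. ?Y k ^ ?\<gamma> k j)"
    by (rule prod.subset_diff[OF \<open>?H \<subseteq> ?R\<close>]) simp
  also have "(\<Prod>k\<in>?R - ?H. ?Y k ^ ?\<gamma> k j) = (\<Prod>k\<in>?R - ?H. ?Y k ^ ?\<gamma> k 1)"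
    by (rule prod.cong[OF refl]) (simp add: \<gamma>_const)
  finally show ?thesis by (simp add: gq_cofactor_def mult.assoc)
qed

lemma gfun_eq_gq_cofactor_mult_qfun:
  assumes "r \<le> s" and "inj_on (cls \<alpha> \<beta> s c) {1..r}"
    and "cls \<alpha> \<beta> s c ` {1..s} = cls \<alpha> \<beta> s c ` {1..r}"
    and "1 \<le> s" and "1 \<le> m"
  shows "gfun \<alpha> \<beta> s m lam \<kappa> c = (\<lambda>t. gq_cofactor \<alpha> \<beta> s m r c t * qfun \<alpha> \<beta> s m r lam c \<kappa> t)"
proof
  fix t
  let ?P = "gq_cofactor \<alpha> \<beta> s m r c t"
    and ?Q = "\<lambda>j. \<Prod>k\<in>Hset \<alpha> \<beta> s m r c. Yfun \<alpha> \<beta> s c k t ^ gam \<alpha> \<beta> s m c k j"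
  have "gfun \<alpha> \<beta> s m lam \<kappa> c t = stoich \<alpha> \<beta> 1 1 *
      (\<Sum>j=1..m. lam j * \<kappa> j * (\<Prod>l=1..s. (Acoef \<alpha> \<beta> l * t + Bcoef \<alpha> \<beta> c l) ^ \<alpha> l j))"
    by (simp add: gfun_eq_net_rate_along_line[OF assms(4)] net_rate_def)
  also have "\<dots> = stoich \<alpha> \<beta> 1 1 * (\<Sum>j=1..m. ?P * (lam j * \<kappa> j * Ccoef \<alpha> \<beta> s c j * ?Q j))"
  proof (intro arg_cong[of _ _ "(*) _"] sum.cong refl)
    fix j assume "j \<in> {1..m}"
    from prod_line_eq_gq_cofactor_mult[OF assms(1-3,5) this]
    show "lam j * \<kappa> j * (\<Prod>l=1..s. (Acoef \<alpha> \<beta> l * t + Bcoef \<alpha> \<beta> c l) ^ \<alpha> l j)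
        = ?P * (lam j * \<kappa> j * Ccoef \<alpha> \<beta> s c j * ?Q j)"
      by (simp add: mult_ac)
  qed
  also have "\<dots> = ?P * qfun \<alpha> \<beta> s m r lam c \<kappa> t"
    by (simp add: qfun_def sum_distrib_left mult_ac)
  finally show "gfun \<alpha> \<beta> s m lam \<kappa> c t = ?P * qfun \<alpha> \<beta> s m r lam c \<kappa> t" .
qed

end

theorem lemma5p9:
  fixes \<alpha> \<beta> :: "nat \<Rightarrow> nat \<Rightarrow> nat" and s m r :: nat
    and lam \<kappa> x c :: "nat \<Rightarrow> real"
  assumes "s \<ge> 1" and "m \<ge> 1"
    and one_dim: "stoich \<alpha> \<beta> 1 1 \<noteq> 0"
    and lam1: "lam 1 = 1" and lam_nz: "\<forall>j\<in>{1..m}. lam j \<noteq> 0"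
    and lam_rel: "\<forall>i\<in>{1..s}. \<forall>j\<in>{1..m}. stoich \<alpha> \<beta> i j = lam j * stoich \<alpha> \<beta> i 1"
    and labels: "1 \<le> r" "r \<le> s" "inj_on (cls \<alpha> \<beta> s c) {1..r}"
       "cls \<alpha> \<beta> s c ` {1..s} = cls \<alpha> \<beta> s c ` {1..r}"
    and kpos: "\<forall>j\<in>{1..m}. \<kappa> j > 0"
    and ss: "steady_state \<alpha> \<beta> s m \<kappa> x" and pos: "positive_vec s x"
    and inP: "x \<in> compat_class \<alpha> \<beta> s c"
  shows "sgn (deriv (gfun \<alpha> \<beta> s m lam \<kappa> c) (x 1)) = sgn (deriv (qfun \<alpha> \<beta> s m r lam c \<kappa>) (x 1))
       \<and> (stable \<alpha> \<beta> s m \<kappa> x \<longleftrightarrow> deriv (qfun \<alpha> \<beta> s m r lam c \<kappa>) (x 1) < 0)"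
proof -
  interpret one_dim_network \<alpha> \<beta> s m lam
    using assms(1-4) lam_rel by unfold_locales blast+
  interpret positive_compat_point \<alpha> \<beta> s c x
    using one_dim pos inP by unfold_locales
  let ?g = "gfun \<alpha> \<beta> s m lam \<kappa> c" and ?q = "qfun \<alpha> \<beta> s m r lam c \<kappa>"
    and ?P = "gq_cofactor \<alpha> \<beta> s m r c"
  have g_eq: "?g = (\<lambda>t. ?P t * ?q t)"
    using gfun_eq_gq_cofactor_mult_qfun labels(2-4) assms(1,2) by blast
  have P_pos: "?P (x 1) > 0" by (rule gq_cofactor_pos)
  have "?q (x 1) = 0"
    using gfun_steady_state_root[OF ss inP] P_pos unfolding g_eq by simp
  then have "deriv ?g (x 1) = ?P (x 1) * deriv ?q (x 1)"
    unfolding g_eq by (simp add: gq_cofactor_field_differentiable qfun_field_differentiable)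
  moreover have "stable \<alpha> \<beta> s m \<kappa> x \<longleftrightarrow> deriv ?g (x 1) < 0"
    using stable_iff_grad_neg[OF ss] deriv_gfun_eq_grad[OF inP] by simp
  ultimately show ?thesis
    using P_pos by (auto simp: sgn_mult mult_less_0_iff)
qed

end
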